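(* Let $0\le\alpha<1$ and let $r_0=r_0(\alpha)$ be the real root in $(0,1)$ of the equation \[2(1-\alpha)(1-r)^4=1-\alpha+4r+(1+\alpha)r^2.\] Let $\mathcal{F}$ be the class of analytic functions $f(z)=z+\sum_{n\ge2}a_nz^n$ on $\mathbb{D}$ with $|a_n|\le n$ for all $n\ge2$. Then every $f\in\mathcal{F}$ satisfies $\left|\frac{zf''(z)}{f'(z)}\right|\le1-\alpha$ for $|z|\le r_0$; $r_0(\alpha)$ is the radius of convexity of order $\alpha$ of $\mathcal{F}$; and $r_0(1/2)\approx0.064723$ is the radius of uniform convexity of $\mathcal{F}$. All results are sharp (in particular $r_0$ in the first statement cannot be replaced by any larger number).
   Context: $\mathbb{D}=\{z\in\mathbb{C}:|z|<1\}$. For a class $\mathcal{F}$ of analytic functions on $\mathbb{D}$ normalized by $f(0)=0$, $f'(0)=1$, and $0\le\alpha<1$, the radius of convexity of order $\alpha$ of $\mathcal{F}$ is the supremum of $r\in(0,1]$ such that every $f\in\mathcal{F}$ satisfies $f'(z)\ne0$ and $\operatorname{Re}\big(1+zf''(z)/f'(z)\big)>\alpha$ for $|z|<r$. The radius of uniform convexity of $\mathcal{F}$ is the supremum of $r\in(0,1]$ such that every $f\in\mathcal{F}$ satisfies $f'(z)\ne0$ and $\operatorname{Re}\big(1+zf''(z)/f'(z)\big)>\left|zf''(z)/f'(z)\right|$ for $|z|<r$. *)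

theory Defs
  imports "HOL-Analysis.Analysis"
begin

definition classF :: "(complex \<Rightarrow> complex) set" where
  "classF = {f. f holomorphic_on ball 0 1 \<and> f 0 = 0 \<and> deriv f 0 = 1 \<and>
     (\<forall>n\<ge>2. norm ((deriv ^^ n) f 0 / of_nat (fact n)) \<le> real n)}"

definition radius_convexity_order :: "(complex \<Rightarrow> complex) set \<Rightarrow> real \<Rightarrow> real" where
  "radius_convexity_order F \<alpha> = Sup {r \<in> {0<..1}. \<forall>f\<in>F. \<forall>z\<in>ball 0 r.
     deriv f z \<noteq> 0 \<and> Re (1 + z * deriv (deriv f) z / deriv f z) > \<alpha>}"

definition radius_uniform_convexity :: "(complex \<Rightarrow> complex) set \<Rightarrow> real" where
  "radius_uniform_convexity F = Sup {r \<in> {0<..1}. \<forall>f\<in>F. \<forall>z\<in>ball 0 r.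
     deriv f z \<noteq> 0 \<and>
     Re (1 + z * deriv (deriv f) z / deriv f z) > norm (z * deriv (deriv f) z / deriv f z)}"

definition r0 :: "real \<Rightarrow> real" where
  "r0 \<alpha> = (THE r. 0 < r \<and> r < 1 \<and>
      2 * (1 - \<alpha>) * (1 - r) ^ 4 = 1 - \<alpha> + 4 * r + (1 + \<alpha>) * r ^ 2)"

end

theory Submission
  imports Defs "HOL-Complex_Analysis.Complex_Analysis"
begin

(* For f in classF with Taylor coefficients a_n and r = |z|, the bounds |a_n| <= n give
   |f'(z) - 1| <= sum_{n>=2} n^2 r^(n-1) = (1+r)/(1-r)^3 - 1 and
   |f''(z)| <= sum_{n>=2} n^2 (n-1) r^(n-2) = (4+2r)/(1-r)^4.
   Hence |z f''/f'| <= r (4+2r)/(1-r)^4 / (2 - (1+r)/(1-r)^3), and after clearing denominators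
   this is at most 1 - alpha exactly when 2(1-alpha)(1-r)^4 >= 1-alpha+4r+(1+alpha)r^2,
   i.e. when r <= r0(alpha).  The function 2z - z/(1-z)^2 = z - sum_{n>=2} n z^n attains both
   estimates at every z = r in (0,1), where z f''/f' is a negative real number; this gives
   sharpness.  Both radii then follow because convexity of order alpha (and, for alpha = 1/2,
   uniform convexity) holds wherever |z f''/f'| < 1 - alpha and fails wherever z f''/f' is a
   real number below -(1 - alpha). *)

lemma pochhammer_geometric_sums:
  fixes z :: "'a :: {real_normed_field,banach}"
  assumes "norm z < 1"
  shows "(\<lambda>n. pochhammer (of_nat n + 1) k * z ^ n) sums (fact k / (1 - z) ^ Suc k)"
  using assms
proof (induction k arbitrary: z)
  case 0
  then show ?case using geometric_sums[of z] by simp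
next
  case (Suc k)
  have "1 - z \<noteq> 0" using Suc.prems by auto
  then have deriv: "((\<lambda>z. fact k / (1 - z) ^ Suc k) has_field_derivative
                      fact (Suc k) / (1 - z) ^ Suc (Suc k)) (at z)"
    by (auto intro!: derivative_eq_intros simp: divide_simps) (cases k; simp add: algebra_simps)
  have diffs: "diffs (\<lambda>n. pochhammer (of_nat n + 1) k) = (\<lambda>n. pochhammer (of_nat n + 1) (Suc k))"
    by (simp add: diffs_def pochhammer_rec add_ac)
  show ?case
    using termdiffs_sums_strong[where K = 1, OF Suc.IH deriv Suc.prems] unfolding diffs .
qed

lemma squares_power_sums:
  fixes x :: real
  assumes "0 \<le> x" "x < 1"
  shows "(\<lambda>n. (real n + 2)^2 * x ^ (n + 1)) sums ((1 + x) / (1 - x)^3 - 1)"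
proof -
  have "(\<lambda>n. pochhammer (real n + 1) 2 * x ^ n - pochhammer (real n + 1) 1 * x ^ n)
          sums (fact 2 / (1 - x) ^ Suc 2 - fact 1 / (1 - x) ^ Suc 1)"
    using assms by (intro sums_diff pochhammer_geometric_sums; simp only: Suc_numeral) auto
  moreover have "fact 2 / (1 - x) ^ Suc 2 - fact 1 / (1 - x) ^ Suc 1 = (1 + x) / (1 - x)^3"
    using assms by (simp add: divide_simps) (simp add: algebra_simps eval_nat_numeral)
  ultimately have "(\<lambda>n. (real n + 1)^2 * x ^ n) sums ((1 + x) / (1 - x)^3)"
    by (simp add: pochhammer_Suc power2_eq_square algebra_simps numeral_2_eq_2)
  then show ?thesis
    using sums_iff_shift[of "\<lambda>n. (real n + 1)^2 * x ^ n" 1] by (simp add: add_ac)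
qed

lemma cubic_power_sums:
  fixes x :: real
  assumes "0 \<le> x" "x < 1"
  shows "(\<lambda>n. (real n + 2)^2 * (real n + 1) * x ^ n) sums ((4 + 2 * x) / (1 - x)^4)"
proof -
  have "(\<lambda>n. pochhammer (real n + 1) 3 * x ^ n - pochhammer (real n + 1) 2 * x ^ n)
          sums (fact 3 / (1 - x) ^ Suc 3 - fact 2 / (1 - x) ^ Suc 2)"
    using assms by (intro sums_diff pochhammer_geometric_sums; simp only: Suc_numeral) auto
  moreover have "fact 3 / (1 - x) ^ Suc 3 - fact 2 / (1 - x) ^ Suc 2 = (4 + 2 * x) / (1 - x)^4"
    using assms by (simp add: divide_simps fact_numeral) (simp add: algebra_simps eval_nat_numeral)
  ultimately show ?thesis
    by (simp add: pochhammer_Suc power2_eq_square algebra_simps numeral_3_eq_3 numeral_2_eq_2)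
qed

lemma norm_taylor_tail_le:
  fixes g :: "complex \<Rightarrow> complex"
  assumes "g holomorphic_on ball 0 1" and "norm z < 1"
    and "\<And>n. m \<le> n \<Longrightarrow> norm ((deriv ^^ n) g 0 / fact n) \<le> c n"
    and "(\<lambda>n. c (n + m) * norm z ^ (n + m)) sums S"
  shows "norm (g z - (\<Sum>n<m. (deriv ^^ n) g 0 / fact n * z ^ n)) \<le> S"
proof -
  let ?t = "\<lambda>n. (deriv ^^ n) g 0 / fact n * z ^ n"
  have "?t sums g z" using holomorphic_power_series[OF assms(1), of z] assms(2) by simp
  then have tail: "(\<lambda>n. ?t (n + m)) sums (g z - (\<Sum>n<m. ?t n))"
    using sums_iff_shift[of ?t m "g z - (\<Sum>n<m. ?t n)"] by simp
  have bound: "norm (?t (n + m)) \<le> c (n + m) * norm z ^ (n + m)" for n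
    unfolding norm_mult norm_power using assms(3)[of "n + m"] by (simp add: mult_right_mono)
  have "norm (\<Sum>n. ?t (n + m)) \<le> (\<Sum>n. c (n + m) * norm z ^ (n + m))"
    by (rule norm_suminf_le[OF bound sums_summable[OF assms(4)]])
  then show ?thesis
    using sums_unique[OF tail] sums_unique[OF assms(4)] by simp
qed

definition r0_defect :: "real \<Rightarrow> real \<Rightarrow> real" where
  "r0_defect a r = 2 * (1 - a) * (1 - r) ^ 4 - (1 - a + 4 * r + (1 + a) * r ^ 2)"

lemma r0_defect_strict_decreasing:
  assumes "0 \<le> a" "a < 1" "0 \<le> x" "x < y" "y \<le> 1"
  shows "r0_defect a y < r0_defect a x"
proof -
  have "(1 - y) ^ 4 \<le> (1 - x) ^ 4" using assms by (intro power_mono) auto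
  then have "2 * (1 - a) * (1 - y) ^ 4 \<le> 2 * (1 - a) * (1 - x) ^ 4"
    using assms by (intro mult_left_mono) auto
  moreover have "(1 + a) * x ^ 2 \<le> (1 + a) * y ^ 2"
    using assms by (intro mult_left_mono power_mono) auto
  ultimately show ?thesis using assms unfolding r0_defect_def by linarith
qed

lemma r0_is_root:
  assumes "0 \<le> a" "a < 1"
  shows "0 < r0 a" and "r0 a < 1" and "r0_defect a (r0 a) = 0"
proof -
  have "continuous_on {0..1} (r0_defect a)" unfolding r0_defect_def by (intro continuous_intros)
  moreover have "r0_defect a 1 \<le> 0" "0 \<le> r0_defect a 0" using assms by (auto simp: r0_defect_def)
  ultimately obtain x where x: "0 \<le> x" "x \<le> 1" "r0_defect a x = 0"
    using IVT2'[of "r0_defect a" 1 0 0] by auto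
  have "x \<noteq> 0" "x \<noteq> 1" using x assms by (auto simp: r0_defect_def)
  with x have root: "0 < x \<and> x < 1 \<and> 2 * (1 - a) * (1 - x) ^ 4 = 1 - a + 4 * x + (1 + a) * x ^ 2"
    by (auto simp: r0_defect_def)
  have uniq: "y = x" if "0 < y \<and> y < 1 \<and> 2 * (1 - a) * (1 - y) ^ 4 = 1 - a + 4 * y + (1 + a) * y ^ 2" for y
    using that x r0_defect_strict_decreasing[OF assms, of y x] r0_defect_strict_decreasing[OF assms, of x y]
    by (cases x y rule: linorder_cases) (auto simp: r0_defect_def)
  have "r0 a = x" unfolding r0_def using root uniq by (rule the_equality)
  then show "0 < r0 a" "r0 a < 1" "r0_defect a (r0 a) = 0" using root x by auto
qed

lemma r0_defect_nonneg_iff: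
  assumes "0 \<le> a" "a < 1" "0 \<le> x" "x \<le> 1"
  shows "0 \<le> r0_defect a x \<longleftrightarrow> x \<le> r0 a"
  using r0_is_root[OF assms(1,2)] assms
    r0_defect_strict_decreasing[OF assms(1,2), of x "r0 a"] r0_defect_strict_decreasing[OF assms(1,2), of "r0 a" x]
  by (cases x "r0 a" rule: linorder_cases) auto

lemma r0_defect_pos_iff:
  assumes "0 \<le> a" "a < 1" "0 \<le> x" "x \<le> 1"
  shows "0 < r0_defect a x \<longleftrightarrow> x < r0 a"
  using r0_is_root[OF assms(1,2)] assms
    r0_defect_strict_decreasing[OF assms(1,2), of x "r0 a"] r0_defect_strict_decreasing[OF assms(1,2), of "r0 a" x]
  by (cases x "r0 a" rule: linorder_cases) auto

lemma r0_less_one_tenth: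
  assumes "0 \<le> a" "a < 1"
  shows "r0 a < 1/10"
proof -
  have "r0_defect a (1/10) < 0" using assms by (simp add: r0_defect_def eval_nat_numeral field_simps)
  then show ?thesis using r0_defect_nonneg_iff[OF assms, of "1/10"] r0_is_root[OF assms] by auto
qed

lemma r0_one_half_bounds: "0.0647225 < r0 (1/2) \<and> r0 (1/2) < 0.0647235"
proof -
  have "0 < r0_defect (1/2) 0.0647225" "r0_defect (1/2) 0.0647235 < 0"
    by (simp_all add: r0_defect_def eval_nat_numeral)
  then show ?thesis
    using r0_defect_pos_iff[of "1/2" "0.0647225"] r0_defect_nonneg_iff[of "1/2" "0.0647235"] by auto
qed

definition deriv_minorant :: "'a :: field \<Rightarrow> 'a" where
  "deriv_minorant r = 2 - (1 + r) / (1 - r) ^ 3"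

definition deriv2_majorant :: "'a :: field \<Rightarrow> 'a" where
  "deriv2_majorant r = (4 + 2 * r) / (1 - r) ^ 4"

lemma minorant_majorant_gap:
  fixes r :: real
  assumes "r \<noteq> 1"
  shows "(1 - a) * deriv_minorant r - r * deriv2_majorant r = r0_defect a r / (1 - r) ^ 4"
  using assms unfolding deriv_minorant_def deriv2_majorant_def r0_defect_def
  by (simp add: divide_simps) (simp add: algebra_simps eval_nat_numeral)

lemma majorant_le_minorant_iff:
  assumes "0 \<le> a" "a < 1" "0 \<le> r" "r < 1"
  shows "r * deriv2_majorant r \<le> (1 - a) * deriv_minorant r \<longleftrightarrow> r \<le> r0 a"
proof -
  have "r * deriv2_majorant r \<le> (1 - a) * deriv_minorant r \<longleftrightarrow> 0 \<le> r0_defect a r / (1 - r) ^ 4"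
    using minorant_majorant_gap[of r a] assms by auto
  also have "\<dots> \<longleftrightarrow> 0 \<le> r0_defect a r"
    using assms by (simp add: zero_le_divide_iff)
  finally show ?thesis using r0_defect_nonneg_iff[of a r] assms by simp
qed

lemma majorant_less_minorant_iff:
  assumes "0 \<le> a" "a < 1" "0 \<le> r" "r < 1"
  shows "r * deriv2_majorant r < (1 - a) * deriv_minorant r \<longleftrightarrow> r < r0 a"
proof -
  have "r * deriv2_majorant r < (1 - a) * deriv_minorant r \<longleftrightarrow> 0 < r0_defect a r / (1 - r) ^ 4"
    using minorant_majorant_gap[of r a] assms by auto
  also have "\<dots> \<longleftrightarrow> 0 < r0_defect a r"
    using assms by (simp add: zero_less_divide_iff)
  finally show ?thesis using r0_defect_pos_iff[of a r] assms by simp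
qed

lemma deriv_minorant_pos:
  fixes r :: real
  assumes "0 \<le> r" "r \<le> 1/10"
  shows "0 < deriv_minorant r"
proof -
  have "(9/10) ^ 3 \<le> (1 - r) ^ 3" using assms by (intro power_mono) auto
  then have "1 + r < 2 * (1 - r) ^ 3" using assms by (simp add: eval_nat_numeral)
  then show ?thesis using assms by (simp add: deriv_minorant_def field_simps)
qed

lemma classF_higher_deriv_coeff_le:
  assumes "f \<in> classF" "2 \<le> n + j"
  shows "norm ((deriv ^^ n) ((deriv ^^ j) f) 0 / fact n) \<le> real (n + j) * fact (n + j) / fact n"
proof -
  have "norm ((deriv ^^ (n + j)) f 0 / fact (n + j)) \<le> real (n + j)"
    using assms by (auto simp: classF_def)
  then have "norm ((deriv ^^ (n + j)) f 0) \<le> real (n + j) * fact (n + j)"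
    by (simp add: norm_divide divide_le_eq)
  then show ?thesis
    by (simp add: funpow_add norm_divide divide_right_mono)
qed

lemma classF_deriv_minus_one_le:
  assumes "f \<in> classF" "norm z < 1"
  shows "norm (deriv f z - 1) \<le> (1 + norm z) / (1 - norm z) ^ 3 - 1"
proof -
  have hol: "deriv f holomorphic_on ball 0 1"
    using assms(1) by (auto simp: classF_def intro: holomorphic_deriv)
  have "norm ((deriv ^^ n) (deriv f) 0 / fact n) \<le> (real n + 1) ^ 2" if "1 \<le> n" for n
  proof -
    have "norm ((deriv ^^ n) (deriv f) 0 / fact n) \<le> real (n + 1) * fact (n + 1) / fact n"
      using classF_higher_deriv_coeff_le[OF assms(1), of n 1] that by simp
    also have "\<dots> = (real n + 1) ^ 2" by (simp add: field_simps power2_eq_square)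
    finally show ?thesis .
  qed
  moreover have "(\<lambda>n. (real (n + 1) + 1) ^ 2 * norm z ^ (n + 1)) sums ((1 + norm z) / (1 - norm z) ^ 3 - 1)"
    using squares_power_sums[of "norm z"] assms(2) by (simp add: add_ac)
  ultimately have "norm (deriv f z - (\<Sum>n<1. (deriv ^^ n) (deriv f) 0 / fact n * z ^ n))
                     \<le> (1 + norm z) / (1 - norm z) ^ 3 - 1"
    by (intro norm_taylor_tail_le[OF hol assms(2), where c = "\<lambda>n. (real n + 1) ^ 2"]) auto
  then show ?thesis using assms(1) by (simp add: classF_def)
qed

lemma classF_deriv2_le:
  assumes "f \<in> classF" "norm z < 1"
  shows "norm (deriv (deriv f) z) \<le> deriv2_majorant (norm z)"
proof -
  have hol: "deriv (deriv f) holomorphic_on ball 0 1"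
    using assms(1) by (auto simp: classF_def intro!: holomorphic_deriv)
  have "norm ((deriv ^^ n) (deriv (deriv f)) 0 / fact n) \<le> (real n + 2) ^ 2 * (real n + 1)" for n
  proof -
    have "norm ((deriv ^^ n) (deriv (deriv f)) 0 / fact n) \<le> real (n + 2) * fact (n + 2) / fact n"
      using classF_higher_deriv_coeff_le[OF assms(1), of n 2] by (simp add: numeral_2_eq_2)
    also have "\<dots> = (real n + 2) ^ 2 * (real n + 1)"
      by (simp add: numeral_2_eq_2 power2_eq_square field_simps)
    finally show ?thesis .
  qed
  then have "norm (deriv (deriv f) z - (\<Sum>n<0. (deriv ^^ n) (deriv (deriv f)) 0 / fact n * z ^ n))
               \<le> (4 + 2 * norm z) / (1 - norm z) ^ 4"
    using cubic_power_sums[of "norm z"] assms(2)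
    by (intro norm_taylor_tail_le[OF hol assms(2)]) auto
  then show ?thesis by (simp add: deriv2_majorant_def)
qed

lemma classF_deriv_minorant_le:
  assumes "f \<in> classF" "norm z < 1"
  shows "deriv_minorant (norm z) \<le> norm (deriv f z)"
  using classF_deriv_minus_one_le[OF assms] norm_triangle_ineq2[of 1 "deriv f z"]
  by (simp add: deriv_minorant_def norm_minus_commute)

lemma classF_ratio_le_r0:
  assumes "f \<in> classF" "0 \<le> a" "a < 1" "norm z \<le> r0 a"
  shows "deriv f z \<noteq> 0"
    and "norm (z * deriv (deriv f) z / deriv f z) \<le> 1 - a"
    and "norm z < r0 a \<Longrightarrow> norm (z * deriv (deriv f) z / deriv f z) < 1 - a"
proof -
  let ?\<rho> = "norm z"
  have \<rho>: "?\<rho> < 1" "?\<rho> \<le> 1/10" using assms r0_less_one_tenth[OF assms(2,3)] by auto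
  have m: "0 < deriv_minorant ?\<rho>" using deriv_minorant_pos \<rho> by simp
  have lower: "deriv_minorant ?\<rho> \<le> norm (deriv f z)" by (rule classF_deriv_minorant_le[OF assms(1) \<rho>(1)])
  have upper: "?\<rho> * norm (deriv (deriv f) z) \<le> ?\<rho> * deriv2_majorant ?\<rho>"
    using classF_deriv2_le[OF assms(1) \<rho>(1)] by (simp add: mult_left_mono)
  have pos: "0 < norm (deriv f z)" using m lower by linarith
  then show "deriv f z \<noteq> 0" by auto
  have ratio: "norm (z * deriv (deriv f) z / deriv f z) = ?\<rho> * norm (deriv (deriv f) z) / norm (deriv f z)"
    by (simp add: norm_mult norm_divide)
  have minorant: "(1 - a) * deriv_minorant ?\<rho> \<le> (1 - a) * norm (deriv f z)"
    using lower assms(3) by simp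
  have "?\<rho> * deriv2_majorant ?\<rho> \<le> (1 - a) * deriv_minorant ?\<rho>"
    using majorant_le_minorant_iff[OF assms(2,3)] assms(4) \<rho> by simp
  then show "norm (z * deriv (deriv f) z / deriv f z) \<le> 1 - a"
    using ratio upper minorant pos by (simp add: divide_le_eq)
  assume "norm z < r0 a"
  then have "?\<rho> * deriv2_majorant ?\<rho> < (1 - a) * deriv_minorant ?\<rho>"
    using majorant_less_minorant_iff[OF assms(2,3)] \<rho> by simp
  then show "norm (z * deriv (deriv f) z / deriv f z) < 1 - a"
    using ratio upper minorant pos by (simp add: divide_less_eq)
qed

(* Its coefficients -n (n >= 2) all have the sign that makes |f'| smallest and |f''| largest
   on the positive axis. *)
definition extremal_fun :: "complex \<Rightarrow> complex" where
  "extremal_fun z = 2 * z - z / (1 - z) ^ 2"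

lemma extremal_fun_has_deriv:
  assumes "z \<noteq> 1"
  shows "(extremal_fun has_field_derivative deriv_minorant z) (at z)"
proof -
  have "1 - z \<noteq> 0" using assms by simp
  show ?thesis
    unfolding extremal_fun_def [abs_def] deriv_minorant_def
    by (rule DERIV_cong, (rule derivative_intros)+)
       (use \<open>1 - z \<noteq> 0\<close> in \<open>simp_all add: divide_simps\<close>, simp add: algebra_simps eval_nat_numeral)
qed

lemma deriv_minorant_has_deriv:
  fixes z :: complex
  assumes "z \<noteq> 1"
  shows "(deriv_minorant has_field_derivative - deriv2_majorant z) (at z)"
proof -
  have "1 - z \<noteq> 0" using assms by simp
  show ?thesis
    unfolding deriv_minorant_def [abs_def] deriv2_majorant_def
    by (rule DERIV_cong, (rule derivative_intros)+)
       (use \<open>1 - z \<noteq> 0\<close> in \<open>simp_all add: divide_simps\<close>, simp add: algebra_simps eval_nat_numeral)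
qed

lemma deriv_extremal_fun: "norm z < 1 \<Longrightarrow> deriv extremal_fun z = deriv_minorant z"
  by (intro DERIV_imp_deriv extremal_fun_has_deriv) auto

lemma deriv2_extremal_fun:
  assumes "norm z < 1"
  shows "deriv (deriv extremal_fun) z = - deriv2_majorant z"
proof -
  have "(deriv_minorant has_field_derivative - deriv2_majorant z) (at z)"
    using assms by (intro deriv_minorant_has_deriv) auto
  then have "(deriv extremal_fun has_field_derivative - deriv2_majorant z) (at z)"
    by (rule has_field_derivative_transform_within_open[where S = "ball 0 1"])
       (use assms deriv_extremal_fun in auto)
  then show ?thesis by (rule DERIV_imp_deriv)
qed

lemma extremal_fun_sums:
  assumes "norm z < 1"
  shows "(\<lambda>n. (if n = 1 then 1 else - of_nat n) * z ^ n) sums extremal_fun z"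
proof -
  have "(\<lambda>n. of_nat (Suc n) * z ^ Suc n) sums (z / (1 - z) ^ 2)"
    using sums_mult[OF geometric_deriv_sums[OF assms], of z] by (simp add: algebra_simps)
  then have "(\<lambda>n. of_nat n * z ^ n) sums (z / (1 - z) ^ 2)"
    using sums_Suc_iff[of "\<lambda>n. of_nat n * z ^ n"] by simp
  then have "(\<lambda>n. (if n = 1 then 2 * z else 0) - of_nat n * z ^ n) sums extremal_fun z"
    unfolding extremal_fun_def using sums_single[of 1 "\<lambda>_. 2 * z"] by (intro sums_diff) auto
  moreover have "(if n = 1 then 2 * z else 0) - of_nat n * z ^ n = (if n = 1 then 1 else - of_nat n) * z ^ n"
    for n by auto
  ultimately show ?thesis by simp
qed

lemma extremal_fun_taylor_coeff:
  "(deriv ^^ n) extremal_fun 0 / fact n = (if n = 1 then 1 else - of_nat n)"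
proof -
  define G where "G = Abs_fps (\<lambda>n. (if n = 1 then 1 else - of_nat n) :: complex)"
  have "extremal_fun has_fps_expansion G"
    unfolding has_fps_expansion_def
  proof
    have "summable (\<lambda>n. fps_nth G n * (1/2 :: complex) ^ n)"
      using extremal_fun_sums[of "1/2"] by (auto simp: G_def sums_iff)
    then have "norm (1/2 :: complex) \<le> fps_conv_radius G"
      unfolding fps_conv_radius_def by (rule conv_radius_geI)
    then show "0 < fps_conv_radius G" by (rule less_le_trans[rotated]) simp
    have "eventually (\<lambda>z. z \<in> ball 0 1) (nhds (0 :: complex))"
      by (rule eventually_nhds_in_open) auto
    then show "\<forall>\<^sub>F z in nhds 0. eval_fps G z = extremal_fun z"
      by eventually_elim (use extremal_fun_sums in \<open>auto simp: G_def eval_fps_def sums_iff\<close>)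
  qed
  from fps_nth_fps_expansion[OF this, of n] show ?thesis by (simp add: G_def)
qed

lemma extremal_fun_in_classF: "extremal_fun \<in> classF"
  unfolding classF_def
proof (intro CollectI conjI allI impI)
  show "extremal_fun holomorphic_on ball 0 1"
    unfolding extremal_fun_def [abs_def] by (intro holomorphic_intros) auto
  show "extremal_fun 0 = 0" by (simp add: extremal_fun_def)
  show "deriv extremal_fun 0 = 1" by (simp add: deriv_extremal_fun deriv_minorant_def)
  show "norm ((deriv ^^ n) extremal_fun 0 / of_nat (fact n)) \<le> real n" if "2 \<le> n" for n
    using that extremal_fun_taylor_coeff[of n] by simp
qed

lemma extremal_fun_ratio_exceeds:
  assumes "0 \<le> a" "a < 1" "r0 a < y"
  shows "\<exists>z t. norm z < y \<and> 1 - a < t \<and> deriv extremal_fun z \<noteq> 0 \<and>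
           z * deriv (deriv extremal_fun) z / deriv extremal_fun z = - of_real t"
proof -
  define x where "x = min ((r0 a + y) / 2) (1/10)"
  have x: "r0 a < x" "x < y" "0 \<le> x" "x \<le> 1/10"
    using r0_is_root[OF assms(1,2)] r0_less_one_tenth[OF assms(1,2)] assms(3) by (auto simp: x_def min_def)
  have m: "0 < deriv_minorant x" using deriv_minorant_pos x by simp
  have "\<not> x * deriv2_majorant x \<le> (1 - a) * deriv_minorant x"
    using majorant_le_minorant_iff[OF assms(1,2), of x] x by simp
  then have exceeds: "1 - a < x * deriv2_majorant x / deriv_minorant x"
    using m by (simp add: less_divide_eq)
  have "norm (complex_of_real x) < 1" using x by simp
  then have "deriv extremal_fun (of_real x) = of_real (deriv_minorant x)"
    and "deriv (deriv extremal_fun) (of_real x) = - of_real (deriv2_majorant x)"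
    by (simp_all add: deriv_extremal_fun deriv2_extremal_fun deriv_minorant_def deriv2_majorant_def)
  then have "deriv extremal_fun (of_real x) \<noteq> 0 \<and>
      of_real x * deriv (deriv extremal_fun) (of_real x) / deriv extremal_fun (of_real x)
        = - of_real (x * deriv2_majorant x / deriv_minorant x)"
    using m by simp
  then show ?thesis using exceeds x by (intro exI[of _ "of_real x"] exI) auto
qed

lemma classF_radius_eq_r0:
  assumes "0 \<le> a" "a < 1"
    and small: "\<And>w. norm w < 1 - a \<Longrightarrow> P w"
    and large: "\<And>t. 1 - a < t \<Longrightarrow> \<not> P (- complex_of_real t)"
  shows "Sup {r \<in> {0<..1}. \<forall>f\<in>classF. \<forall>z\<in>ball 0 r.
           deriv f z \<noteq> 0 \<and> P (z * deriv (deriv f) z / deriv f z)} = r0 a"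
proof (rule cSup_eq_maximum)
  show "r0 a \<in> {r \<in> {0<..1}. \<forall>f\<in>classF. \<forall>z\<in>ball 0 r.
          deriv f z \<noteq> 0 \<and> P (z * deriv (deriv f) z / deriv f z)}"
    using r0_is_root[OF assms(1,2)] classF_ratio_le_r0[OF _ assms(1,2)] small by auto
next
  fix y
  assume y: "y \<in> {r \<in> {0<..1}. \<forall>f\<in>classF. \<forall>z\<in>ball 0 r.
               deriv f z \<noteq> 0 \<and> P (z * deriv (deriv f) z / deriv f z)}"
  show "y \<le> r0 a"
  proof (rule ccontr)
    assume "\<not> y \<le> r0 a"
    then obtain z t where "norm z < y" "1 - a < t"
      and ratio: "z * deriv (deriv extremal_fun) z / deriv extremal_fun z = - of_real t"
      using extremal_fun_ratio_exceeds[OF assms(1,2)] by force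
    then have "P (- of_real t)"
      using y extremal_fun_in_classF by (force simp flip: ratio)
    with large \<open>1 - a < t\<close> show False by blast
  qed
qed

theorem corollary3p2:
  fixes \<alpha> :: real
  assumes "0 \<le> \<alpha>" and "\<alpha> < 1"
  shows "(\<forall>f\<in>classF. \<forall>z. norm z \<le> r0 \<alpha> \<longrightarrow>
            norm (z * deriv (deriv f) z / deriv f z) \<le> 1 - \<alpha>)
       \<and> (\<forall>r. r0 \<alpha> < r \<and> r \<le> 1 \<longrightarrow> (\<exists>f\<in>classF. \<exists>z. norm z < r \<and>
            norm (z * deriv (deriv f) z / deriv f z) > 1 - \<alpha>))
       \<and> radius_convexity_order classF \<alpha> = r0 \<alpha>
       \<and> radius_uniform_convexity classF = r0 (1/2)
       \<and> 0.0647225 < r0 (1/2) \<and> r0 (1/2) < 0.0647235"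
proof (intro conjI)
  show "\<forall>f\<in>classF. \<forall>z. norm z \<le> r0 \<alpha> \<longrightarrow> norm (z * deriv (deriv f) z / deriv f z) \<le> 1 - \<alpha>"
    using classF_ratio_le_r0(2)[OF _ assms] by blast
  show "\<forall>r. r0 \<alpha> < r \<and> r \<le> 1 \<longrightarrow> (\<exists>f\<in>classF. \<exists>z. norm z < r \<and>
          norm (z * deriv (deriv f) z / deriv f z) > 1 - \<alpha>)"
  proof (intro allI impI)
    fix r
    assume "r0 \<alpha> < r \<and> r \<le> 1"
    then obtain z t where "norm z < r" "1 - \<alpha> < t"
      and "z * deriv (deriv extremal_fun) z / deriv extremal_fun z = - of_real t"
      using extremal_fun_ratio_exceeds[OF assms] by blast
    then show "\<exists>f\<in>classF. \<exists>z. norm z < r \<and> norm (z * deriv (deriv f) z / deriv f z) > 1 - \<alpha>"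
      using extremal_fun_in_classF assms by (intro bexI[of _ extremal_fun] exI[of _ z]) auto
  qed
  show "radius_convexity_order classF \<alpha> = r0 \<alpha>"
    unfolding radius_convexity_order_def
  proof (rule classF_radius_eq_r0[OF assms])
    show "\<alpha> < Re (1 + w)" if "norm w < 1 - \<alpha>" for w
      using that abs_Re_le_cmod[of w] by simp
  qed simp
  show "radius_uniform_convexity classF = r0 (1/2)"
    unfolding radius_uniform_convexity_def
  proof (rule classF_radius_eq_r0[where P = "\<lambda>w. norm w < Re (1 + w)"])
    show "norm w < Re (1 + w)" if "norm w < 1 - 1/2" for w
      using that abs_Re_le_cmod[of w] by simp
  qed simp_all
  show "0.0647225 < r0 (1/2)" "r0 (1/2) < 0.0647235"
    using r0_one_half_bounds by auto
qed

end
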